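(* Let $M=\mathcal{O}_{\lambda,\mathbf p}(M_2(\Bbbk))$ with $\lambda^2\ne 1$, and assume $p_{12}$ and $\lambda p_{21}$ are roots of unity whose orders $\operatorname{ord}(p_{12})$ and $\operatorname{ord}(\lambda p_{21})$ are relatively prime. Let $\ell=\operatorname{lcm}(\operatorname{ord}(p_{12}),\operatorname{ord}(\lambda p_{21}))$ and $y_{ij}=x_{ij}^\ell$ for $i,j\in\{1,2\}$. Then the center of $M$ is the polynomial ring $Z(M)=\Bbbk[y_{11},y_{12},y_{21},y_{22}]$.
   Context: $\Bbbk$ is an algebraically closed field of characteristic zero, $\lambda,p_{12}\in\Bbbk^\times$, $p_{21}=p_{12}^{-1}$. $\mathcal{O}_{\lambda,\mathbf p}(M_2(\Bbbk))$ is the $\Bbbk$-algebra generated by $x_{11},x_{12},x_{21},x_{22}$ with relations $x_{12}x_{11}=p_{12}x_{11}x_{12}$, $x_{21}x_{11}=\lambda p_{21}x_{11}x_{21}$, $x_{22}x_{12}=\lambda p_{21}x_{12}x_{22}$, $x_{22}x_{21}=p_{12}x_{21}x_{22}$, $x_{21}x_{12}=\lambda p_{21}^2x_{12}x_{21}$, $x_{22}x_{11}=x_{11}x_{22}+(\lambda-1)p_{21}x_{12}x_{21}$. For $\alpha\in\Bbbk^\times$, $\operatorname{ord}(\alpha)$ is its order in the multiplicative group $\Bbbk^\times$. *)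

theory Defs
  imports "HOL-Computational_Algebra.Polynomial"
begin

datatype gen = X11 | X12 | X21 | X22

text \<open>Free associative algebra over 'k on the generators: coefficient functions on words
  (elements of the free algebra are the finitely supported ones).\<close>
type_synonym 'k falg = "gen list \<Rightarrow> 'k"

definition fin_supp :: "'k::zero falg \<Rightarrow> bool" where
  "fin_supp f \<longleftrightarrow> finite {w. f w \<noteq> 0}"

definition fa_mult :: "'k::comm_ring_1 falg \<Rightarrow> 'k falg \<Rightarrow> 'k falg" where
  "fa_mult f g = (\<lambda>w. \<Sum>i\<le>length w. f (take i w) * g (drop i w))"

definition fa_word :: "gen list \<Rightarrow> 'k::comm_ring_1 falg" where
  "fa_word u = (\<lambda>w. if w = u then 1 else 0)"

definition fa_one :: "'k::comm_ring_1 falg" where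
  "fa_one = fa_word []"

definition fa_gen :: "gen \<Rightarrow> 'k::comm_ring_1 falg" where
  "fa_gen a = fa_word [a]"

definition fa_pow :: "'k::comm_ring_1 falg \<Rightarrow> nat \<Rightarrow> 'k falg" where
  "fa_pow f n = ((fa_mult f) ^^ n) fa_one"

definition fa_smult :: "'k::comm_ring_1 \<Rightarrow> 'k falg \<Rightarrow> 'k falg" where
  "fa_smult c f = (\<lambda>w. c * f w)"

definition fa_add :: "'k::comm_ring_1 falg \<Rightarrow> 'k falg \<Rightarrow> 'k falg" where
  "fa_add f g = (\<lambda>w. f w + g w)"

definition fa_diff :: "'k::comm_ring_1 falg \<Rightarrow> 'k falg \<Rightarrow> 'k falg" where
  "fa_diff f g = (\<lambda>w. f w - g w)"

text \<open>Defining relations of O_{lambda,p}(M_2(k)), with p21 = p12^{-1},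
  each written as (lhs - rhs).\<close>
definition qm_rels :: "'k::field \<Rightarrow> 'k \<Rightarrow> 'k falg set" where
  "qm_rels lam p12 = (let p21 = inverse p12; x = fa_gen; m = fa_mult in
     { fa_diff (m (x X12) (x X11)) (fa_smult p12 (m (x X11) (x X12))),
       fa_diff (m (x X21) (x X11)) (fa_smult (lam * p21) (m (x X11) (x X21))),
       fa_diff (m (x X22) (x X12)) (fa_smult (lam * p21) (m (x X12) (x X22))),
       fa_diff (m (x X22) (x X21)) (fa_smult p12 (m (x X21) (x X22))),
       fa_diff (m (x X21) (x X12)) (fa_smult (lam * p21^2) (m (x X12) (x X21))),
       fa_diff (m (x X22) (x X11))
          (fa_add (m (x X11) (x X22)) (fa_smult ((lam - 1) * p21) (m (x X12) (x X21)))) })"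

inductive qm_ideal :: "'k::field \<Rightarrow> 'k \<Rightarrow> 'k falg \<Rightarrow> bool" for lam p12 where
  zero: "qm_ideal lam p12 (\<lambda>w. 0)"
| gen: "r \<in> qm_rels lam p12 \<Longrightarrow>
          qm_ideal lam p12 (fa_smult c (fa_mult (fa_word u) (fa_mult r (fa_word v))))"
| add: "qm_ideal lam p12 f \<Longrightarrow> qm_ideal lam p12 g \<Longrightarrow> qm_ideal lam p12 (fa_add f g)"

text \<open>Equality in M = free algebra / ideal.\<close>
definition qm_eq :: "'k::field \<Rightarrow> 'k \<Rightarrow> 'k falg \<Rightarrow> 'k falg \<Rightarrow> bool" where
  "qm_eq lam p12 f g \<longleftrightarrow> qm_ideal lam p12 (fa_diff f g)"

definition qm_central :: "'k::field \<Rightarrow> 'k \<Rightarrow> 'k falg \<Rightarrow> bool" where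
  "qm_central lam p12 f \<longleftrightarrow>
     (\<forall>g. fin_supp g \<longrightarrow> qm_eq lam p12 (fa_mult f g) (fa_mult g f))"

definition mord :: "'k::field \<Rightarrow> nat" where
  "mord a = (LEAST n. 0 < n \<and> a ^ n = 1)"

definition ymon :: "nat \<Rightarrow> nat \<times> nat \<times> nat \<times> nat \<Rightarrow> 'k::comm_ring_1 falg" where
  "ymon l m = (case m of (a, b, c, d) \<Rightarrow>
      fa_mult (fa_pow (fa_pow (fa_gen X11) l) a)
       (fa_mult (fa_pow (fa_pow (fa_gen X12) l) b)
        (fa_mult (fa_pow (fa_pow (fa_gen X21) l) c) (fa_pow (fa_pow (fa_gen X22) l) d))))"

definition ycomb :: "nat \<Rightarrow> (nat \<times> nat \<times> nat \<times> nat) set \<Rightarrow> (nat \<times> nat \<times> nat \<times> nat \<Rightarrow> 'k)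
    \<Rightarrow> 'k::comm_ring_1 falg" where
  "ycomb l S c = (\<lambda>w. \<Sum>m\<in>S. c m * ymon l m w)"

end

theory Submission
  imports Defs
begin

text \<open>Left multiplication by the generators, written on the coefficients with respect to the
  PBW basis \<open>x11\<^sup>a x12\<^sup>b x21\<^sup>c x22\<^sup>d\<close>, gives a representation of the free algebra that kills the
  defining relations. Since every word can be straightened into an ordered one, its value on
  \<open>1\<close> is the normal form, so two elements agree in \<open>M\<close> iff their actions agree on \<open>1\<close>.

  An element is central iff its action commutes with all left multiplications, and then its
  normal form \<open>v\<close> satisfies \<open>x v = v x\<close> for every generator \<open>x\<close>. With \<open>q = p12\<close> and
  \<open>r = \<lambda> p21\<close>, comparing coefficients at a monomial of \<open>v\<close> gives
  \<open>q\<^sup>a\<^sup>+\<^sup>c = r\<^sup>c\<^sup>+\<^sup>d\<close>, \<open>q\<^sup>b\<^sup>+\<^sup>d = r\<^sup>a\<^sup>+\<^sup>b\<close> and \<open>q\<^sup>b r\<^sup>c = q\<^sup>c r\<^sup>b = 1\<close>; as the orders of \<open>q\<close> and \<open>r\<close> are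
  coprime, all exponents are divisible by \<open>l\<close>. Conversely \<open>x\<^sub>i\<^sub>j\<^sup>l\<close> commutes with every
  generator, since the generators skew-commute by \<open>q\<close>, \<open>r\<close> or \<open>r/q\<close>, except for \<open>x11\<close> and \<open>x22\<close>
  whose correction term for \<open>x22 x11\<^sup>l\<close> is a multiple of \<open>\<lambda>\<^sup>l - 1 = 0\<close>. The monomials in the
  \<open>y\<^sub>i\<^sub>j\<close> are linearly independent, being distinct PBW monomials.\<close>

section \<open>Words in the free algebra\<close>

lemma fa_mult_word_left:
  "fa_mult (fa_word u) f x = (if take (length u) x = u then f (drop (length u) x) else 0)"
proof -
  have "fa_mult (fa_word u) f x = (\<Sum>i\<le>length x. if i = length u then
        (if take (length u) x = u then f (drop (length u) x) else 0) else 0)"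
    unfolding fa_mult_def fa_word_def by (rule sum.cong) auto
  also have "\<dots> = (if take (length u) x = u then f (drop (length u) x) else 0)"
    by (auto simp: sum.delta dest: arg_cong[of _ _ length])
  finally show ?thesis .
qed

lemma fa_mult_word_right:
  "fa_mult f (fa_word v) x = (if length v \<le> length x \<and> drop (length x - length v) x = v
      then f (take (length x - length v) x) else 0)"
proof -
  have "fa_mult f (fa_word v) x = (\<Sum>i\<le>length x. if i = length x - length v then
        (if length v \<le> length x \<and> drop (length x - length v) x = v
          then f (take (length x - length v) x) else 0) else 0)"
    unfolding fa_mult_def fa_word_def by (rule sum.cong) auto
  then show ?thesis by (simp add: sum.delta)
qed

lemma fa_mult_word_word: "fa_mult (fa_word u) (fa_word v) = fa_word (u @ v)"
proof
  fix x
  show "fa_mult (fa_word u) (fa_word v) x = fa_word (u @ v) x"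
    unfolding fa_mult_word_left by (auto simp: fa_word_def) (metis append_take_drop_id)
qed

lemma fa_mult_gen_gen: "fa_mult (fa_gen a) (fa_gen b) = fa_word [a, b]"
  by (simp add: fa_gen_def fa_mult_word_word)

lemma fa_pow_word: "fa_pow (fa_word u) n = fa_word (concat (replicate n u))"
  by (induction n) (simp_all add: fa_pow_def fa_one_def fa_mult_word_word)

lemma fa_mult_sum_right:
  "fa_mult f (\<lambda>x. \<Sum>s\<in>S. c s * g s x) x = (\<Sum>s\<in>S. c s * fa_mult f (g s) x)"
  unfolding fa_mult_def sum_distrib_left
  by (subst sum.swap) (simp add: mult.left_commute)

lemma fa_sandwich_at: "fa_mult (fa_word u) (fa_mult h (fa_word v)) (u @ y @ v) = h y"
  by (simp add: fa_mult_word_left fa_mult_word_right)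

lemma fa_sandwich_outside:
  assumes "\<forall>y. x \<noteq> u @ y @ v"
  shows "fa_mult (fa_word u) (fa_mult h (fa_word v)) x = 0"
proof (rule ccontr)
  assume "fa_mult (fa_word u) (fa_mult h (fa_word v)) x \<noteq> 0"
  then have "take (length u) x = u"
    and "drop (length (drop (length u) x) - length v) (drop (length u) x) = v"
    by (auto simp: fa_mult_word_left fa_mult_word_right split: if_splits)
  then have "x = u @ take (length (drop (length u) x) - length v) (drop (length u) x) @ v"
    by (metis append_take_drop_id)
  with assms show False by metis
qed

lemma fa_sandwich_eqI:
  assumes "\<And>y. G (u @ y @ v) = h y" and "\<And>x. \<forall>y. x \<noteq> u @ y @ v \<Longrightarrow> G x = 0"
  shows "fa_mult (fa_word u) (fa_mult h (fa_word v)) = G"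
proof
  fix x
  show "fa_mult (fa_word u) (fa_mult h (fa_word v)) x = G x"
    by (cases "\<exists>y. x = u @ y @ v") (auto simp: assms fa_sandwich_at fa_sandwich_outside)
qed

lemma fin_supp_word: "fin_supp (fa_word u)"
  by (simp add: fin_supp_def fa_word_def)

lemma fin_supp_sum:
  fixes g :: "'s \<Rightarrow> 'k::comm_ring_1 falg"
  assumes "finite S" and "\<And>s. s \<in> S \<Longrightarrow> fin_supp (g s)"
  shows "fin_supp (\<lambda>w. \<Sum>s\<in>S. c s * g s w)"
  unfolding fin_supp_def
proof (rule finite_subset)
  show "{w. (\<Sum>s\<in>S. c s * g s w) \<noteq> 0} \<subseteq> (\<Union>s\<in>S. {w. g s w \<noteq> 0})"
  proof
    fix w assume "w \<in> {w. (\<Sum>s\<in>S. c s * g s w) \<noteq> 0}"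
    then obtain s where "s \<in> S" "c s * g s w \<noteq> 0"
      by (auto elim: sum.not_neutral_contains_not_neutral)
    then show "w \<in> (\<Union>s\<in>S. {w. g s w \<noteq> 0})" by (cases "g s w = 0") auto
  qed
  show "finite (\<Union>s\<in>S. {w. g s w \<noteq> 0})"
    using assms by (simp add: fin_supp_def)
qed

lemma fin_supp_lincomb:
  fixes f g :: "'k::comm_ring_1 falg"
  assumes "fin_supp f" and "fin_supp g"
  shows "fin_supp (\<lambda>w. a * f w + b * g w)"
proof -
  have "fin_supp (\<lambda>w. \<Sum>s\<in>{True, False}. (if s then a else b) * (if s then f else g) w)"
    using assms by (intro fin_supp_sum) auto
  then show ?thesis by simp
qed

lemma fin_supp_mult:
  assumes "fin_supp f" and "fin_supp g"
  shows "fin_supp (fa_mult f g)"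
  unfolding fin_supp_def
proof (rule finite_subset)
  show "{w. fa_mult f g w \<noteq> 0} \<subseteq> (\<lambda>(a, b). a @ b) ` ({w. f w \<noteq> 0} \<times> {w. g w \<noteq> 0})"
  proof
    fix x assume "x \<in> {w. fa_mult f g w \<noteq> 0}"
    then obtain i where "f (take i x) * g (drop i x) \<noteq> 0"
      unfolding fa_mult_def by (auto elim: sum.not_neutral_contains_not_neutral)
    then show "x \<in> (\<lambda>(a, b). a @ b) ` ({w. f w \<noteq> 0} \<times> {w. g w \<noteq> 0})"
      by (intro image_eqI[of _ _ "(take i x, drop i x)"]) auto
  qed
  show "finite ((\<lambda>(a, b). a @ b) ` ({w. f w \<noteq> 0} \<times> {w. g w \<noteq> 0}))"
    using assms by (simp add: fin_supp_def)
qed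

lemma fin_supp_word_expansion:
  assumes "fin_supp g"
  shows "g = (\<lambda>x. \<Sum>w | g w \<noteq> 0. g w * fa_word w x)"
proof
  fix x
  have "(\<Sum>w | g w \<noteq> 0. g w * fa_word w x) = (\<Sum>w | g w \<noteq> 0. if w = x then g x else 0)"
    by (rule sum.cong) (auto simp: fa_word_def)
  then show "g x = (\<Sum>w | g w \<noteq> 0. g w * fa_word w x)"
    using assms by (simp add: fin_supp_def sum.delta)
qed

section \<open>The ideal of relations\<close>

lemma qm_ideal_smult: "qm_ideal lam p f \<Longrightarrow> qm_ideal lam p (\<lambda>x. c * f x)"
proof (induction rule: qm_ideal.induct)
  case zero
  then show ?case by (simp add: qm_ideal.zero)
next
  case (gen r c' u v)
  then show ?case
    using qm_ideal.gen[OF gen, of "c * c'" u v] by (simp add: fa_smult_def mult.assoc)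
next
  case (add f g)
  then show ?case
    using qm_ideal.add[OF add.IH] by (simp add: fa_add_def distrib_left)
qed

lemma qm_ideal_lincomb:
  "qm_ideal lam p f \<Longrightarrow> qm_ideal lam p g \<Longrightarrow> qm_ideal lam p (\<lambda>x. a * f x + b * g x)"
  using qm_ideal.add[OF qm_ideal_smult qm_ideal_smult] by (simp add: fa_add_def)

lemma qm_ideal_sum:
  "finite S \<Longrightarrow> (\<And>s. s \<in> S \<Longrightarrow> qm_ideal lam p (g s)) \<Longrightarrow>
   qm_ideal lam p (\<lambda>x. \<Sum>s\<in>S. c s * g s x)"
proof (induction S rule: finite_induct)
  case empty
  then show ?case by (simp add: qm_ideal.zero)
next
  case (insert s S)
  then show ?case
    using qm_ideal_lincomb[of lam p "g s" _ "c s" 1] by simp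
qed

lemma qm_rels_explicit: "qm_rels lam p12 =
  {(\<lambda>y. fa_word [X12,X11] y - p12 * fa_word [X11,X12] y),
   (\<lambda>y. fa_word [X21,X11] y - (lam * inverse p12) * fa_word [X11,X21] y),
   (\<lambda>y. fa_word [X22,X12] y - (lam * inverse p12) * fa_word [X12,X22] y),
   (\<lambda>y. fa_word [X22,X21] y - p12 * fa_word [X21,X22] y),
   (\<lambda>y. fa_word [X21,X12] y - (lam * inverse p12 ^ 2) * fa_word [X12,X21] y),
   (\<lambda>y. fa_word [X22,X11] y -
      (fa_word [X11,X22] y + ((lam - 1) * inverse p12) * fa_word [X12,X21] y))}"
  unfolding qm_rels_def Let_def fa_mult_gen_gen fa_diff_def fa_smult_def fa_add_def by simp

lemma fin_supp_qm_rels: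
  assumes "r \<in> qm_rels lam p"
  shows "fin_supp r"
proof -
  have "{w. r w \<noteq> 0} \<subseteq> {w. set w \<subseteq> {X11, X12, X21, X22} \<and> length w = 2}"
  proof
    fix w assume "w \<in> {w. r w \<noteq> 0}"
    with assms have "length w = 2"
      unfolding qm_rels_explicit
      by (elim CollectE insertE emptyE; simp add: fa_word_def split: if_splits)
    moreover have "set w \<subseteq> {X11, X12, X21, X22}"
      by (auto intro: gen.exhaust)
    ultimately show "w \<in> {w. set w \<subseteq> {X11, X12, X21, X22} \<and> length w = 2}" by simp
  qed
  then show ?thesis
    unfolding fin_supp_def by (rule finite_subset) (rule finite_lists_length_eq, simp)
qed

lemma fin_supp_qm_ideal: "qm_ideal lam p f \<Longrightarrow> fin_supp f"
proof (induction rule: qm_ideal.induct)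
  case zero
  then show ?case by (simp add: fin_supp_def)
next
  case (gen r c u v)
  have "fin_supp (fa_mult (fa_word u) (fa_mult r (fa_word v)))"
    by (intro fin_supp_mult fin_supp_word fin_supp_qm_rels[OF gen])
  then show ?case
    using fin_supp_lincomb[of _ _ c 0] by (simp add: fa_smult_def)
next
  case (add f g)
  then show ?case
    using fin_supp_lincomb[OF add.IH, of 1 1] by (simp add: fa_add_def)
qed

lemma qm_eq_refl: "qm_eq lam p f f"
  by (simp add: qm_eq_def fa_diff_def qm_ideal.zero)

lemma qm_eq_sym:
  assumes "qm_eq lam p f g"
  shows "qm_eq lam p g f"
proof -
  have "qm_ideal lam p (\<lambda>x. (- 1) * (f x - g x))"
    using assms unfolding qm_eq_def fa_diff_def by (rule qm_ideal_smult)
  then show ?thesis by (simp add: qm_eq_def fa_diff_def)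
qed

lemma qm_eq_trans:
  assumes "qm_eq lam p f g" and "qm_eq lam p g h"
  shows "qm_eq lam p f h"
proof -
  have "qm_ideal lam p (\<lambda>x. 1 * (f x - g x) + 1 * (g x - h x))"
    using assms unfolding qm_eq_def fa_diff_def by (rule qm_ideal_lincomb)
  then show ?thesis by (simp add: qm_eq_def fa_diff_def)
qed

lemma qm_eq_lincomb:
  assumes "qm_eq lam p f f'" and "qm_eq lam p g g'"
  shows "qm_eq lam p (\<lambda>x. a * f x + b * g x) (\<lambda>x. a * f' x + b * g' x)"
proof -
  have "qm_ideal lam p (\<lambda>x. a * (f x - f' x) + b * (g x - g' x))"
    using assms unfolding qm_eq_def fa_diff_def by (rule qm_ideal_lincomb)
  then show ?thesis by (simp add: qm_eq_def fa_diff_def algebra_simps)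
qed

lemma qm_eq_sum:
  "finite S \<Longrightarrow> (\<And>s. s \<in> S \<Longrightarrow> qm_eq lam p (g s) (g' s)) \<Longrightarrow>
   qm_eq lam p (\<lambda>x. \<Sum>s\<in>S. c s * g s x) (\<lambda>x. \<Sum>s\<in>S. c s * g' s x)"
  unfolding qm_eq_def using qm_ideal_sum[of S lam p "\<lambda>s. fa_diff (g s) (g' s)" c]
  by (simp add: fa_diff_def sum_subtractf right_diff_distrib)

section \<open>Coordinates with respect to the PBW basis\<close>

type_synonym 'k pbw = "nat \<times> nat \<times> nat \<times> nat \<Rightarrow> 'k"

fun gen_rank :: "gen \<Rightarrow> nat" where
  "gen_rank X11 = 0" | "gen_rank X12 = 1" | "gen_rank X21 = 2" | "gen_rank X22 = 3"

definition pbw_word :: "nat \<times> nat \<times> nat \<times> nat \<Rightarrow> gen list" where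
  "pbw_word = (\<lambda>(a, b, c, d).
     replicate a X11 @ replicate b X12 @ replicate c X21 @ replicate d X22)"

definition exponents :: "gen list \<Rightarrow> nat \<times> nat \<times> nat \<times> nat" where
  "exponents w = (count_list w X11, count_list w X12, count_list w X21, count_list w X22)"

lemma count_list_replicate: "count_list (replicate n x) y = (if x = y then n else 0)"
  by (induction n) auto

lemma sorted_pbw_word: "sorted (map gen_rank (pbw_word m))"
  by (cases m) (auto simp: pbw_word_def sorted_append)

lemma exponents_pbw_word [simp]: "exponents (pbw_word m) = m"
  by (cases m) (simp add: pbw_word_def exponents_def count_list_replicate)

lemma pbw_word_exponents: "sorted (map gen_rank w) \<Longrightarrow> pbw_word (exponents w) = w"
proof (induction w)
  case Nil
  then show ?case by (simp add: pbw_word_def exponents_def)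
next
  case (Cons g w)
  then have IH: "pbw_word (exponents w) = w" and le: "\<forall>x\<in>set w. gen_rank g \<le> gen_rank x"
    by auto
  show ?case
  proof (cases g)
    case X11
    then show ?thesis using IH by (simp add: pbw_word_def exponents_def)
  next
    case X12
    then have "X11 \<notin> set w" using le by fastforce
    then show ?thesis using IH X12 by (simp add: pbw_word_def exponents_def)
  next
    case X21
    then have "X11 \<notin> set w" "X12 \<notin> set w" using le by fastforce+
    then show ?thesis using IH X21 by (simp add: pbw_word_def exponents_def)
  next
    case X22
    then have "X11 \<notin> set w" "X12 \<notin> set w" "X21 \<notin> set w" using le by fastforce+
    then show ?thesis using IH X22 by (simp add: pbw_word_def exponents_def)
  qed
qed

definition pbw_basis :: "nat \<times> nat \<times> nat \<times> nat \<Rightarrow> 'k::zero_neq_one pbw" where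
  "pbw_basis m = (\<lambda>m'. if m' = m then 1 else 0)"

abbreviation pbw_one :: "'k::zero_neq_one pbw" where
  "pbw_one \<equiv> pbw_basis (0, 0, 0, 0)"

text \<open>With \<open>q = p12\<close> and \<open>r = \<lambda> p21\<close>, moving \<open>x22\<close> past \<open>x11\<^sup>n\<close> gives
  \<open>x22 x11\<^sup>n = x11\<^sup>n x22 + kappa q r n \<cdot> x11\<^sup>n\<^sup>-\<^sup>1 x12 x21\<close>.
  This is the only correction term in the left and right multiplications by a generator,
  written below on the coefficients of the basis \<open>x11\<^sup>a x12\<^sup>b x21\<^sup>c x22\<^sup>d\<close> of \<open>M\<close>.\<close>

definition kappa :: "'k::field \<Rightarrow> 'k \<Rightarrow> nat \<Rightarrow> 'k" where
  "kappa q r n = ((q * r) ^ n - 1) / q"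

definition lmul :: "'k::field \<Rightarrow> 'k \<Rightarrow> gen \<Rightarrow> 'k pbw \<Rightarrow> 'k pbw" where
  "lmul q r g v = (\<lambda>(a, b, c, d). case g of
     X11 \<Rightarrow> (case a of 0 \<Rightarrow> 0 | Suc a' \<Rightarrow> v (a', b, c, d))
   | X12 \<Rightarrow> (case b of 0 \<Rightarrow> 0 | Suc b' \<Rightarrow> q ^ a * v (a, b', c, d))
   | X21 \<Rightarrow> (case c of 0 \<Rightarrow> 0 | Suc c' \<Rightarrow> r ^ a * (r / q) ^ b * v (a, b, c', d))
   | X22 \<Rightarrow> (case d of 0 \<Rightarrow> 0 | Suc d' \<Rightarrow> r ^ b * q ^ c * v (a, b, c, d'))
       + (case b of 0 \<Rightarrow> 0 | Suc b' \<Rightarrow> (case c of 0 \<Rightarrow> 0 | Suc c' \<Rightarrow>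
            kappa q r (a + 1) * (r / q) ^ b' * v (a + 1, b', c', d))))"

definition rmul :: "'k::field \<Rightarrow> 'k \<Rightarrow> gen \<Rightarrow> 'k pbw \<Rightarrow> 'k pbw" where
  "rmul q r g v = (\<lambda>(a, b, c, d). case g of
     X11 \<Rightarrow> (case a of 0 \<Rightarrow> 0 | Suc a' \<Rightarrow> q ^ b * r ^ c * v (a', b, c, d))
       + (case b of 0 \<Rightarrow> 0 | Suc b' \<Rightarrow> (case c of 0 \<Rightarrow> 0 | Suc c' \<Rightarrow>
            kappa q r (d + 1) * (r / q) ^ c' * v (a, b', c', d + 1)))
   | X12 \<Rightarrow> (case b of 0 \<Rightarrow> 0 | Suc b' \<Rightarrow> r ^ d * (r / q) ^ c * v (a, b', c, d))
   | X21 \<Rightarrow> (case c of 0 \<Rightarrow> 0 | Suc c' \<Rightarrow> q ^ d * v (a, b, c', d))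
   | X22 \<Rightarrow> (case d of 0 \<Rightarrow> 0 | Suc d' \<Rightarrow> v (a, b, c, d')))"

lemma lmul_rmul_comm:
  assumes "q \<noteq> 0" and "r \<noteq> 0"
  shows "lmul q r g (rmul q r h v) = rmul q r h (lmul q r g v)"
proof (rule ext, clarify)
  fix a b c d
  show "lmul q r g (rmul q r h v) (a, b, c, d) = rmul q r h (lmul q r g v) (a, b, c, d)"
    using assms
    by (cases g; cases h;
        simp add: lmul_def rmul_def kappa_def field_simps power_Suc split: nat.split)
qed

lemma lmul_one_eq_rmul_one: "lmul q r g pbw_one = rmul q r g pbw_one"
proof (rule ext, clarify)
  fix a b c d
  show "lmul q r g pbw_one (a, b, c, d) = rmul q r g pbw_one (a, b, c, d)"
    by (cases g; cases a; cases b; cases c; cases d; simp add: lmul_def rmul_def pbw_basis_def)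
qed

lemma lmul_commutation:
  assumes "q \<noteq> 0" and "r \<noteq> 0"
  shows "lmul q r X12 (lmul q r X11 v) = (\<lambda>m. q * lmul q r X11 (lmul q r X12 v) m)"
    and "lmul q r X21 (lmul q r X11 v) = (\<lambda>m. r * lmul q r X11 (lmul q r X21 v) m)"
    and "lmul q r X22 (lmul q r X12 v) = (\<lambda>m. r * lmul q r X12 (lmul q r X22 v) m)"
    and "lmul q r X22 (lmul q r X21 v) = (\<lambda>m. q * lmul q r X21 (lmul q r X22 v) m)"
    and "lmul q r X21 (lmul q r X12 v) = (\<lambda>m. (r / q) * lmul q r X12 (lmul q r X21 v) m)"
    and "lmul q r X22 (lmul q r X11 v) = (\<lambda>m. lmul q r X11 (lmul q r X22 v) m
           + kappa q r 1 * lmul q r X12 (lmul q r X21 v) m)"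
  using assms
  by (auto intro!: ext simp: lmul_def kappa_def field_simps power_Suc split: nat.split)

lemma lmul_pbw_basis:
  shows "lmul q r X11 (pbw_basis (a, b, c, d)) = pbw_basis (Suc a, b, c, d)"
    and "lmul q r X12 (pbw_basis (0, b, c, d)) = pbw_basis (0, Suc b, c, d)"
    and "lmul q r X21 (pbw_basis (0, 0, c, d)) = pbw_basis (0, 0, Suc c, d)"
    and "lmul q r X22 (pbw_basis (0, 0, 0, d)) = pbw_basis (0, 0, 0, Suc d)"
  by (auto intro!: ext simp: lmul_def pbw_basis_def split: nat.split)

lemma lmul_at:
  shows "lmul q r X11 v (Suc a, b, c, d) = v (a, b, c, d)"
    and "lmul q r X12 v (a, Suc b, c, d) = q ^ a * v (a, b, c, d)"
    and "lmul q r X21 v (a, b, Suc c, d) = r ^ a * (r / q) ^ b * v (a, b, c, d)"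
    and "lmul q r X22 v (a, b, c, Suc d) = r ^ b * q ^ c * v (a, b, c, d)
      + (if 0 < b \<and> 0 < c then kappa q r (a + 1) * (r / q) ^ (b - 1) * v (a + 1, b - 1, c - 1, d + 1)
         else 0)"
  by (cases b; cases c; simp add: lmul_def)+

lemma rmul_at:
  shows "rmul q r X11 v (Suc a, b, c, d) = q ^ b * r ^ c * v (a, b, c, d)
      + (if 0 < b \<and> 0 < c then kappa q r (d + 1) * (r / q) ^ (c - 1) * v (a + 1, b - 1, c - 1, d + 1)
         else 0)"
    and "rmul q r X12 v (a, Suc b, c, d) = r ^ d * (r / q) ^ c * v (a, b, c, d)"
    and "rmul q r X21 v (a, b, Suc c, d) = q ^ d * v (a, b, c, d)"
    and "rmul q r X22 v (a, b, c, Suc d) = v (a, b, c, d)"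
  by (cases b; cases c; simp add: rmul_def)+

definition pbw_linear :: "('k::field pbw \<Rightarrow> 'k pbw) \<Rightarrow> bool" where
  "pbw_linear F \<longleftrightarrow> (\<forall>v w s t. F (\<lambda>m. s * v m + t * w m) = (\<lambda>m. s * F v m + t * F w m))"

lemma pbw_linearD:
  "pbw_linear F \<Longrightarrow> F (\<lambda>m. s * v m + t * w m) = (\<lambda>m. s * F v m + t * F w m)"
  by (simp add: pbw_linear_def)

lemma pbw_linear_lmul: "pbw_linear (lmul q r g)"
  by (auto intro!: ext simp: pbw_linear_def lmul_def algebra_simps split: nat.split gen.split)

lemma pbw_linear_rmul: "pbw_linear (rmul q r g)"
  by (auto intro!: ext simp: pbw_linear_def rmul_def algebra_simps split: nat.split gen.split)

lemma pbw_linear_comp: "pbw_linear F \<Longrightarrow> pbw_linear G \<Longrightarrow> pbw_linear (\<lambda>v. F (G v))"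
  by (simp add: pbw_linear_def)

lemma pbw_linear_smult: "pbw_linear F \<Longrightarrow> F (\<lambda>m. s * v m) = (\<lambda>m. s * F v m)"
  using pbw_linearD[of F s v 0 v] by simp

lemma pbw_linear_sum:
  assumes "pbw_linear F" and "finite I"
  shows "F (\<lambda>m. \<Sum>i\<in>I. c i * v i m) = (\<lambda>m. \<Sum>i\<in>I. c i * F (v i) m)"
  using assms(2)
proof (induction I rule: finite_induct)
  case empty
  then show ?case using pbw_linear_smult[OF assms(1), of 0 "\<lambda>m. 0"] by simp
next
  case (insert i I)
  then show ?case
    using pbw_linearD[OF assms(1), of "c i" "v i" 1 "\<lambda>m. \<Sum>i\<in>I. c i * v i m"] by simp
qed

primrec act_word :: "'k::field \<Rightarrow> 'k \<Rightarrow> gen list \<Rightarrow> 'k pbw \<Rightarrow> 'k pbw" where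
  "act_word q r [] v = v"
| "act_word q r (g # w) v = lmul q r g (act_word q r w v)"

lemma act_word_append: "act_word q r (u @ w) v = act_word q r u (act_word q r w v)"
  by (induction u) auto

lemma act_word_replicate_Suc:
  "act_word q r (replicate (Suc n) g) v = act_word q r (replicate n g) (lmul q r g v)"
  by (metis act_word.simps act_word_append replicate_Suc replicate_append_same)

lemma pbw_linear_act_word: "pbw_linear (act_word q r w)"
proof (induction w)
  case Nil
  then show ?case by (simp add: pbw_linear_def)
next
  case (Cons g w)
  then show ?case using pbw_linear_comp[OF pbw_linear_lmul] by simp
qed

lemma act_word_zero: "act_word q r w (\<lambda>m. 0) = (\<lambda>m. 0)"
  using pbw_linear_smult[OF pbw_linear_act_word, of q r w 0 "\<lambda>m. 0"] by simp

lemma act_word_pbw_word: "act_word q r (pbw_word m) pbw_one = pbw_basis m"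
proof -
  obtain a b c d where m: "m = (a, b, c, d)" by (cases m)
  have "act_word q r (replicate d X22) pbw_one = pbw_basis (0, 0, 0, d)"
    by (induction d) (simp_all add: lmul_pbw_basis)
  moreover have "act_word q r (replicate c X21) (pbw_basis (0, 0, 0, d)) = pbw_basis (0, 0, c, d)"
    by (induction c) (simp_all add: lmul_pbw_basis)
  moreover have "act_word q r (replicate b X12) (pbw_basis (0, 0, c, d)) = pbw_basis (0, b, c, d)"
    by (induction b) (simp_all add: lmul_pbw_basis)
  moreover have "act_word q r (replicate a X11) (pbw_basis (0, b, c, d)) = pbw_basis (a, b, c, d)"
    by (induction a) (simp_all add: lmul_pbw_basis)
  ultimately show ?thesis by (simp add: m pbw_word_def act_word_append)
qed

lemma act_word_rmul_comm:
  "q \<noteq> 0 \<Longrightarrow> r \<noteq> 0 \<Longrightarrow> act_word q r w (rmul q r h v) = rmul q r h (act_word q r w v)"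
  by (induction w) (auto simp: lmul_rmul_comm)

section \<open>The representation of the free algebra\<close>

definition act :: "'k::field \<Rightarrow> 'k \<Rightarrow> 'k falg \<Rightarrow> 'k pbw \<Rightarrow> 'k pbw" where
  "act q r f v = (\<lambda>m. \<Sum>w | f w \<noteq> 0. f w * act_word q r w v m)"

lemma act_eq_sum_superset:
  assumes "finite W" and "{w. f w \<noteq> 0} \<subseteq> W"
  shows "act q r f v m = (\<Sum>w\<in>W. f w * act_word q r w v m)"
  unfolding act_def by (rule sum.mono_neutral_left[OF assms]) auto

lemma act_sum:
  assumes "finite S" and "\<And>s. s \<in> S \<Longrightarrow> fin_supp (g s)"
  shows "act q r (\<lambda>w. \<Sum>s\<in>S. c s * g s w) v = (\<lambda>m. \<Sum>s\<in>S. c s * act q r (g s) v m)"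
proof
  fix m
  let ?W = "\<Union>s\<in>S. {w. g s w \<noteq> 0}"
  have W: "finite ?W" using assms by (simp add: fin_supp_def)
  have "{w. (\<Sum>s\<in>S. c s * g s w) \<noteq> 0} \<subseteq> ?W"
  proof
    fix w assume "w \<in> {w. (\<Sum>s\<in>S. c s * g s w) \<noteq> 0}"
    then obtain s where "s \<in> S" "c s * g s w \<noteq> 0"
      by (auto elim: sum.not_neutral_contains_not_neutral)
    then show "w \<in> ?W" by (cases "g s w = 0") auto
  qed
  then have "act q r (\<lambda>w. \<Sum>s\<in>S. c s * g s w) v m
      = (\<Sum>w\<in>?W. (\<Sum>s\<in>S. c s * g s w) * act_word q r w v m)"
    by (rule act_eq_sum_superset[OF W])
  also have "\<dots> = (\<Sum>s\<in>S. c s * (\<Sum>w\<in>?W. g s w * act_word q r w v m))"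
    by (simp only: sum_distrib_right sum_distrib_left mult.assoc) (rule sum.swap)
  also have "\<dots> = (\<Sum>s\<in>S. c s * act q r (g s) v m)"
    by (rule sum.cong[OF refl]) (subst act_eq_sum_superset[OF W], auto)
  finally show "act q r (\<lambda>w. \<Sum>s\<in>S. c s * g s w) v m = (\<Sum>s\<in>S. c s * act q r (g s) v m)" .
qed

lemma act_lincomb:
  assumes "fin_supp f" and "fin_supp g"
  shows "act q r (\<lambda>w. a * f w + b * g w) v = (\<lambda>m. a * act q r f v m + b * act q r g v m)"
  using act_sum[of "{True, False}" "\<lambda>s. if s then f else g" q r "\<lambda>s. if s then a else b" v]
    assms by simp

lemma act_fa_word: "act q r (fa_word u) = act_word q r u"
proof (intro ext)
  fix v m
  have "act q r (fa_word u) v m = (\<Sum>w\<in>{u}. fa_word u w * act_word q r w v m)"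
    by (rule act_eq_sum_superset) (auto simp: fa_word_def)
  then show "act q r (fa_word u) v m = act_word q r u v m" by (simp add: fa_word_def)
qed

lemma pbw_linear_act: "pbw_linear (act q r f)"
  unfolding pbw_linear_def act_def
  by (simp add: pbw_linearD[OF pbw_linear_act_word] sum.distrib sum_distrib_left algebra_simps)

lemma act_mult_word_right:
  assumes "fin_supp f"
  shows "act q r (fa_mult f (fa_word u)) v = act q r f (act_word q r u v)"
proof
  fix m
  let ?F = "{w. f w \<noteq> 0}"
  have val: "fa_mult f (fa_word u) (w @ u) = f w" for w
    by (simp add: fa_mult_word_right)
  have "{w. fa_mult f (fa_word u) w \<noteq> 0} \<subseteq> (\<lambda>w. w @ u) ` ?F"
  proof
    fix x assume "x \<in> {w. fa_mult f (fa_word u) w \<noteq> 0}"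
    then have nz: "fa_mult f (fa_word u) x \<noteq> 0" by simp
    then have "x = take (length x - length u) x @ u"
      by (auto simp: fa_mult_word_right split: if_splits) (metis append_take_drop_id)
    with nz val show "x \<in> (\<lambda>w. w @ u) ` ?F" by (metis (mono_tags) image_eqI mem_Collect_eq)
  qed
  then have "act q r (fa_mult f (fa_word u)) v m
      = (\<Sum>x\<in>(\<lambda>w. w @ u) ` ?F. fa_mult f (fa_word u) x * act_word q r x v m)"
    using assms by (intro act_eq_sum_superset) (simp_all add: fin_supp_def)
  also have "\<dots> = (\<Sum>w\<in>?F. f w * act_word q r w (act_word q r u v) m)"
    by (subst sum.reindex) (auto simp: inj_on_def val act_word_append)
  finally show "act q r (fa_mult f (fa_word u)) v m = act q r f (act_word q r u v) m"
    by (simp add: act_def)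
qed

lemma act_mult_word_left:
  assumes "fin_supp f"
  shows "act q r (fa_mult (fa_word u) f) v = act_word q r u (act q r f v)"
proof
  fix m
  let ?F = "{w. f w \<noteq> 0}"
  have F: "finite ?F" using assms by (simp add: fin_supp_def)
  have val: "fa_mult (fa_word u) f (u @ w) = f w" for w
    by (simp add: fa_mult_word_left)
  have "{w. fa_mult (fa_word u) f w \<noteq> 0} \<subseteq> (\<lambda>w. u @ w) ` ?F"
  proof
    fix x assume "x \<in> {w. fa_mult (fa_word u) f w \<noteq> 0}"
    then have nz: "fa_mult (fa_word u) f x \<noteq> 0" by simp
    then have "x = u @ drop (length u) x"
      by (auto simp: fa_mult_word_left split: if_splits) (metis append_take_drop_id)
    with nz val show "x \<in> (\<lambda>w. u @ w) ` ?F" by (metis (mono_tags) image_eqI mem_Collect_eq)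
  qed
  then have "act q r (fa_mult (fa_word u) f) v m
      = (\<Sum>x\<in>(\<lambda>w. u @ w) ` ?F. fa_mult (fa_word u) f x * act_word q r x v m)"
    using F by (intro act_eq_sum_superset) simp_all
  also have "\<dots> = (\<Sum>w\<in>?F. f w * act_word q r u (act_word q r w v) m)"
    by (subst sum.reindex) (auto simp: inj_on_def val act_word_append)
  also have "\<dots> = act_word q r u (act q r f v) m"
    by (simp add: act_def pbw_linear_sum[OF pbw_linear_act_word F])
  finally show "act q r (fa_mult (fa_word u) f) v m = act_word q r u (act q r f v) m" .
qed

lemma act_mult:
  assumes f: "fin_supp f" and g: "fin_supp g"
  shows "act q r (fa_mult f g) v = act q r f (act q r g v)"
proof -
  let ?G = "{w. g w \<noteq> 0}"
  have G: "finite ?G" using g by (simp add: fin_supp_def)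
  have "fa_mult f g = fa_mult f (\<lambda>x. \<Sum>w\<in>?G. g w * fa_word w x)"
    using fin_supp_word_expansion[OF g] by simp
  also have "\<dots> = (\<lambda>x. \<Sum>w\<in>?G. g w * fa_mult f (fa_word w) x)"
    by (rule ext) (rule fa_mult_sum_right)
  finally have "act q r (fa_mult f g) v = (\<lambda>m. \<Sum>w\<in>?G. g w * act q r (fa_mult f (fa_word w)) v m)"
    using G f by (simp add: act_sum fin_supp_mult fin_supp_word)
  also have "\<dots> = act q r f (\<lambda>m. \<Sum>w\<in>?G. g w * act_word q r w v m)"
    by (simp add: act_mult_word_right[OF f] pbw_linear_sum[OF pbw_linear_act G])
  finally show ?thesis by (simp add: act_def)
qed

lemma act_rmul_comm:
  assumes "q \<noteq> 0" and "r \<noteq> 0" and "fin_supp f"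
  shows "act q r f (rmul q r h v) = rmul q r h (act q r f v)"
  using assms
  by (simp add: act_def act_word_rmul_comm pbw_linear_sum[OF pbw_linear_rmul] fin_supp_def)

lemma act_commute_act_word:
  assumes "\<And>h v. act q r f (lmul q r h v) = lmul q r h (act q r f v)"
  shows "act q r f (act_word q r w v) = act_word q r w (act q r f v)"
  by (induction w) (simp_all add: assms)

text \<open>For \<open>gen_rank h < gen_rank g\<close> the relations of \<open>M\<close> read \<open>x\<^sub>g x\<^sub>h = \<alpha> x\<^sub>h x\<^sub>g + \<beta> x12 x21\<close> with
  \<open>(\<alpha>, \<beta>) = straighten_coeffs q r g h\<close>; on the other pairs the value \<open>(1, 0)\<close> is junk.\<close>

fun straighten_coeffs :: "'k::field \<Rightarrow> 'k \<Rightarrow> gen \<Rightarrow> gen \<Rightarrow> 'k \<times> 'k" where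
  "straighten_coeffs q r X12 X11 = (q, 0)"
| "straighten_coeffs q r X21 X11 = (r, 0)"
| "straighten_coeffs q r X22 X12 = (r, 0)"
| "straighten_coeffs q r X22 X21 = (q, 0)"
| "straighten_coeffs q r X21 X12 = (r / q, 0)"
| "straighten_coeffs q r X22 X11 = (1, kappa q r 1)"
| "straighten_coeffs q r _ _ = (1, 0)"

definition straightening_rel :: "'k::field \<Rightarrow> 'k \<Rightarrow> gen \<Rightarrow> gen \<Rightarrow> 'k falg" where
  "straightening_rel q r g h = (\<lambda>w. fa_word [g, h] w -
     (fst (straighten_coeffs q r g h) * fa_word [h, g] w
      + snd (straighten_coeffs q r g h) * fa_word [X12, X21] w))"

lemma out_of_order_pairs:
  "{(g, h). gen_rank h < gen_rank g} =
   {(X12, X11), (X21, X11), (X22, X12), (X22, X21), (X21, X12), (X22, X11)}"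
proof -
  have "gen_rank h < gen_rank g \<longleftrightarrow>
      (g, h) \<in> {(X12, X11), (X21, X11), (X22, X12), (X22, X21), (X21, X12), (X22, X11)}" for g h
    by (cases g; cases h) simp_all
  then show ?thesis by auto
qed

lemma qm_rels_straightening:
  assumes "q \<noteq> 0"
  shows "qm_rels (q * r) q = (\<lambda>(g, h). straightening_rel q r g h) ` {(g, h). gen_rank h < gen_rank g}"
proof -
  have coeffs: "q * r * inverse q = r" "q * r * inverse q ^ 2 = r / q"
    "(q * r - 1) * inverse q = kappa q r 1"
    using assms by (simp_all add: kappa_def field_simps power2_eq_square)
  show ?thesis
    unfolding qm_rels_explicit out_of_order_pairs coeffs by (simp add: straightening_rel_def)
qed

lemma lmul_straighten:
  assumes "q \<noteq> 0" and "r \<noteq> 0" and "gen_rank h < gen_rank g"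
  shows "lmul q r g (lmul q r h v) = (\<lambda>m. fst (straighten_coeffs q r g h) * lmul q r h (lmul q r g v) m
     + snd (straighten_coeffs q r g h) * lmul q r X12 (lmul q r X21 v) m)"
  using assms(3) lmul_commutation[OF assms(1,2)] by (cases g; cases h) simp_all

lemma straighten_coeffs_snd:
  "snd (straighten_coeffs q r g h) \<noteq> 0 \<Longrightarrow> g = X22 \<and> h = X11"
  by (cases g; cases h) simp_all

lemma straighten_coeffs_skew:
  "gen_rank h < gen_rank g \<Longrightarrow> (g, h) \<noteq> (X22, X11) \<Longrightarrow>
   straighten_coeffs q r g h \<in> {(q, 0), (r, 0), (r / q, 0)}"
  by (cases g; cases h) simp_all

lemma act_straightening_rel:
  assumes "q \<noteq> 0" and "r \<noteq> 0" and "gen_rank h < gen_rank g"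
  shows "act q r (straightening_rel q r g h) v = (\<lambda>m. 0)"
proof -
  obtain \<alpha> \<beta> where c: "straighten_coeffs q r g h = (\<alpha>, \<beta>)" by fastforce
  let ?rest = "\<lambda>w. \<alpha> * fa_word [h, g] w + \<beta> * fa_word [X12, X21] w"
  have rel: "straightening_rel q r g h = (\<lambda>w. 1 * fa_word [g, h] w + (- 1) * ?rest w)"
    by (simp add: straightening_rel_def c algebra_simps)
  have "act q r ?rest v = (\<lambda>m. \<alpha> * act_word q r [h, g] v m + \<beta> * act_word q r [X12, X21] v m)"
    by (simp add: act_lincomb fin_supp_word act_fa_word)
  then have "act q r (straightening_rel q r g h) v = (\<lambda>m. act_word q r [g, h] v m
      - (\<alpha> * act_word q r [h, g] v m + \<beta> * act_word q r [X12, X21] v m))"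
    unfolding rel
    by (subst act_lincomb) (simp_all add: fin_supp_lincomb fin_supp_word act_fa_word algebra_simps)
  then show ?thesis by (simp add: lmul_straighten[OF assms] c)
qed

lemma act_qm_ideal:
  assumes "q \<noteq> 0" and "r \<noteq> 0"
  shows "qm_ideal (q * r) q f \<Longrightarrow> act q r f v = (\<lambda>m. 0)"
proof (induction arbitrary: v rule: qm_ideal.induct)
  case zero
  then show ?case by (simp add: act_def)
next
  case (gen rel c u w)
  obtain g h where gh: "gen_rank h < gen_rank g" and rel: "rel = straightening_rel q r g h"
    using gen qm_rels_straightening[OF assms(1)] by auto
  have fin: "fin_supp rel" "fin_supp (fa_mult rel (fa_word w))"
    using fin_supp_qm_rels[OF gen] by (simp_all add: fin_supp_mult fin_supp_word)
  have "act q r (fa_mult (fa_word u) (fa_mult rel (fa_word w))) v = (\<lambda>m. 0)"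
    by (simp only: act_mult_word_left[OF fin(2)] act_mult_word_right[OF fin(1)])
      (simp add: rel act_straightening_rel[OF assms gh] act_word_zero)
  then show ?case
    using act_lincomb[of _ _ q r c 0 v] fin by (simp add: fa_smult_def fin_supp_mult fin_supp_word)
next
  case (add f g)
  then show ?case
    using act_lincomb[OF fin_supp_qm_ideal[OF add.hyps(1)] fin_supp_qm_ideal[OF add.hyps(2)],
        of q r 1 1 v]
    by (simp add: fa_add_def)
qed

section \<open>The PBW normal form\<close>

definition pbw_elem :: "'k::zero pbw \<Rightarrow> 'k falg" where
  "pbw_elem v = (\<lambda>w. if sorted (map gen_rank w) then v (exponents w) else 0)"

lemma pbw_elem_basis: "pbw_elem (pbw_basis m) = fa_word (pbw_word m)"
proof
  fix x
  show "pbw_elem (pbw_basis m) x = fa_word (pbw_word m) x"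
  proof (cases "x = pbw_word m")
    case True
    then show ?thesis by (simp add: pbw_elem_def pbw_basis_def fa_word_def sorted_pbw_word)
  next
    case False
    then have "\<not> (sorted (map gen_rank x) \<and> exponents x = m)"
      using pbw_word_exponents by metis
    then show ?thesis using False by (auto simp: pbw_elem_def pbw_basis_def fa_word_def)
  qed
qed

lemma pbw_elem_act_word: "pbw_elem (act_word q r (pbw_word m) pbw_one) = fa_word (pbw_word m)"
  by (simp add: act_word_pbw_word pbw_elem_basis)

lemma pbw_elem_lincomb:
  fixes v u :: "'k::comm_ring_1 pbw"
  shows "pbw_elem (\<lambda>m. a * v m + b * u m) = (\<lambda>w. a * pbw_elem v w + b * pbw_elem u w)"
  by (rule ext) (simp add: pbw_elem_def)

lemma finite_coeffs_if_fin_supp_pbw_elem: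
  assumes "fin_supp (pbw_elem v)"
  shows "finite {m. v m \<noteq> 0}"
proof (rule finite_subset)
  show "{m. v m \<noteq> 0} \<subseteq> exponents ` {w. pbw_elem v w \<noteq> 0}"
  proof
    fix m assume "m \<in> {m. v m \<noteq> 0}"
    then have "pbw_elem v (pbw_word m) \<noteq> 0" by (simp add: pbw_elem_def sorted_pbw_word)
    then show "m \<in> exponents ` {w. pbw_elem v w \<noteq> 0}"
      by (metis (mono_tags) exponents_pbw_word image_eqI mem_Collect_eq)
  qed
  show "finite (exponents ` {w. pbw_elem v w \<noteq> 0})"
    using assms by (simp add: fin_supp_def)
qed

primrec inversions :: "gen list \<Rightarrow> nat" where
  "inversions [] = 0"
| "inversions (g # w) = length (filter (\<lambda>h. gen_rank h < gen_rank g) w) + inversions w"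

definition count_x11_x22 :: "gen list \<Rightarrow> nat" where
  "count_x11_x22 w = count_list w X11 + count_list w X22"

lemma inversions_swap:
  "gen_rank h < gen_rank g \<Longrightarrow> inversions (u @ [h, g] @ v) < inversions (u @ [g, h] @ v)"
  by (induction u) auto

lemma not_sorted_obtain_descent:
  assumes "\<not> sorted (map gen_rank w)"
  obtains u g h v where "w = u @ [g, h] @ v" and "gen_rank h < gen_rank g"
  using assms
proof (induction w arbitrary: thesis)
  case Nil
  then show ?case by simp
next
  case (Cons x w)
  show ?case
  proof (cases "w \<noteq> [] \<and> gen_rank (hd w) < gen_rank x")
    case True
    then show ?thesis using Cons.prems(1)[of "[]" x "hd w" "tl w"] by simp
  next
    case False
    then have "\<not> sorted (map gen_rank w)"
      using Cons.prems(2) by (cases w) (auto, meson le_trans not_less)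
    then obtain u g h v where "w = u @ [g, h] @ v" "gen_rank h < gen_rank g"
      using Cons.IH by blast
    then show ?thesis using Cons.prems(1)[of "x # u"] by simp
  qed
qed

lemma qm_eq_straighten_in_context:
  assumes "q \<noteq> 0" and "gen_rank h < gen_rank g" and c: "straighten_coeffs q r g h = (\<alpha>, \<beta>)"
  shows "qm_eq (q * r) q (fa_word (u @ [g, h] @ v))
           (\<lambda>x. \<alpha> * fa_word (u @ [h, g] @ v) x + \<beta> * fa_word (u @ [X12, X21] @ v) x)"
proof -
  have "straightening_rel q r g h \<in> qm_rels (q * r) q"
    using assms(2) by (auto simp: qm_rels_straightening[OF assms(1)])
  from qm_ideal.gen[OF this, of 1 u v]
  have "qm_ideal (q * r) q (fa_mult (fa_word u) (fa_mult (straightening_rel q r g h) (fa_word v)))"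
    by (simp add: fa_smult_def)
  also have "fa_mult (fa_word u) (fa_mult (straightening_rel q r g h) (fa_word v)) =
      (\<lambda>x. fa_word (u @ [g, h] @ v) x
        - (\<alpha> * fa_word (u @ [h, g] @ v) x + \<beta> * fa_word (u @ [X12, X21] @ v) x))"
  proof (rule fa_sandwich_eqI)
    fix x assume "\<forall>y. x \<noteq> u @ y @ v"
    then have "x \<noteq> u @ [g, h] @ v" "x \<noteq> u @ [h, g] @ v" "x \<noteq> u @ [X12, X21] @ v" by blast+
    then show "fa_word (u @ [g, h] @ v) x
        - (\<alpha> * fa_word (u @ [h, g] @ v) x + \<beta> * fa_word (u @ [X12, X21] @ v) x) = 0"
      by (simp add: fa_word_def)
  qed (simp add: straightening_rel_def c fa_word_def)
  finally show ?thesis by (simp add: qm_eq_def fa_diff_def)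
qed

lemma act_word_straighten_in_context:
  assumes "q \<noteq> 0" and "r \<noteq> 0" and "gen_rank h < gen_rank g"
    and c: "straighten_coeffs q r g h = (\<alpha>, \<beta>)"
  shows "act_word q r (u @ [g, h] @ v) y = (\<lambda>m. \<alpha> * act_word q r (u @ [h, g] @ v) y m
           + \<beta> * act_word q r (u @ [X12, X21] @ v) y m)"
  by (simp add: act_word_append lmul_straighten[OF assms(1-3)] c pbw_linearD[OF pbw_linear_act_word])

text \<open>Lexicographic induction on \<open>count_x11_x22\<close> and \<open>inversions\<close>: swapping a pair lowers the
  inversions, and the correction term \<open>x12 x21\<close> of \<open>x22 x11\<close> lowers \<open>count_x11_x22\<close>.\<close>

lemma qm_eq_word_normal_form:
  assumes "q \<noteq> 0" and "r \<noteq> 0"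
  shows "qm_eq (q * r) q (fa_word w) (pbw_elem (act_word q r w pbw_one))"
proof (induction w rule: wf_induct_rule[OF wf_measures[of "[count_x11_x22, inversions]"]])
  case (1 w)
  show ?case
  proof (cases "sorted (map gen_rank w)")
    case True
    then show ?thesis
      using pbw_elem_act_word[of q r "exponents w"] by (simp add: pbw_word_exponents qm_eq_refl)
  next
    case False
    then obtain u g h v where w: "w = u @ [g, h] @ v" and gh: "gen_rank h < gen_rank g"
      by (rule not_sorted_obtain_descent)
    obtain \<alpha> \<beta> where c: "straighten_coeffs q r g h = (\<alpha>, \<beta>)" by fastforce
    let ?swapped = "u @ [h, g] @ v" and ?reduced = "u @ [X12, X21] @ v"
    have IH1: "qm_eq (q * r) q (fa_word ?swapped) (pbw_elem (act_word q r ?swapped pbw_one))"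
      using 1 inversions_swap[OF gh] by (simp add: w count_x11_x22_def)
    have IH2: "\<beta> = 0 \<or> qm_eq (q * r) q (fa_word ?reduced) (pbw_elem (act_word q r ?reduced pbw_one))"
    proof (cases "\<beta> = 0")
      case False
      then have "g = X22" "h = X11" using straighten_coeffs_snd[of q r g h] c by auto
      then show ?thesis using 1 by (simp add: w count_x11_x22_def)
    qed simp
    have comb: "qm_eq (q * r) q (\<lambda>x. \<alpha> * fa_word ?swapped x + \<beta> * fa_word ?reduced x)
        (\<lambda>x. \<alpha> * pbw_elem (act_word q r ?swapped pbw_one) x
           + \<beta> * pbw_elem (act_word q r ?reduced pbw_one) x)"
      using IH2
    proof (elim disjE)
      assume "\<beta> = 0"
      then show ?thesis using qm_eq_lincomb[OF IH1 qm_eq_refl, of \<alpha> 0] by simp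
    qed (rule qm_eq_lincomb[OF IH1])
    have "pbw_elem (act_word q r w pbw_one) = (\<lambda>x. \<alpha> * pbw_elem (act_word q r ?swapped pbw_one) x
        + \<beta> * pbw_elem (act_word q r ?reduced pbw_one) x)"
      by (simp only: w act_word_straighten_in_context[OF assms gh c]) (simp add: pbw_elem_lincomb)
    with qm_eq_trans[OF qm_eq_straighten_in_context[OF assms(1) gh c] comb] show ?thesis
      by (simp add: w)
  qed
qed

lemma qm_eq_pbw_normal_form:
  assumes "q \<noteq> 0" and "r \<noteq> 0" and "fin_supp f"
  shows "qm_eq (q * r) q f (pbw_elem (act q r f pbw_one))"
proof -
  have "qm_eq (q * r) q (\<lambda>x. \<Sum>w | f w \<noteq> 0. f w * fa_word w x)
      (\<lambda>x. \<Sum>w | f w \<noteq> 0. f w * pbw_elem (act_word q r w pbw_one) x)"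
    using assms by (intro qm_eq_sum qm_eq_word_normal_form) (simp_all add: fin_supp_def)
  moreover have "pbw_elem (act q r f pbw_one)
      = (\<lambda>x. \<Sum>w | f w \<noteq> 0. f w * pbw_elem (act_word q r w pbw_one) x)"
    by (simp add: pbw_elem_def act_def fun_eq_iff)
  ultimately show ?thesis
    by (simp flip: fin_supp_word_expansion[OF assms(3)])
qed

lemma act_eq_if_qm_eq:
  assumes "q \<noteq> 0" and "r \<noteq> 0" and "fin_supp f" and "fin_supp g" and "qm_eq (q * r) q f g"
  shows "act q r f v = act q r g v"
proof -
  have diff: "fa_diff f g = (\<lambda>w. 1 * f w + (- 1) * g w)"
    by (simp add: fa_diff_def)
  have "act q r (fa_diff f g) v = (\<lambda>m. 0)"
    using act_qm_ideal[OF assms(1,2)] assms(5) by (simp add: qm_eq_def)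
  then have "(\<lambda>m. 1 * act q r f v m + (- 1) * act q r g v m) = (\<lambda>m. 0)"
    by (simp only: diff act_lincomb[OF assms(3,4)])
  then show ?thesis by (simp add: fun_eq_iff)
qed

lemma qm_eq_iff_act_one:
  assumes "q \<noteq> 0" and "r \<noteq> 0" and "fin_supp f" and "fin_supp g"
  shows "qm_eq (q * r) q f g \<longleftrightarrow> act q r f pbw_one = act q r g pbw_one"
proof
  assume "act q r f pbw_one = act q r g pbw_one"
  then show "qm_eq (q * r) q f g"
    using qm_eq_pbw_normal_form[OF assms(1,2,3)] qm_eq_pbw_normal_form[OF assms(1,2,4)]
    by (metis qm_eq_sym qm_eq_trans)
qed (rule act_eq_if_qm_eq[OF assms])

lemma finite_coeffs_act_one:
  assumes "q \<noteq> 0" and "r \<noteq> 0" and "fin_supp f"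
  shows "finite {m. act q r f pbw_one m \<noteq> 0}"
proof (rule finite_coeffs_if_fin_supp_pbw_elem)
  let ?e = "pbw_elem (act q r f pbw_one)"
  have "fin_supp (\<lambda>x. 1 * f x + (- 1) * (f x - ?e x))"
    using qm_eq_pbw_normal_form[OF assms] assms(3)
    by (intro fin_supp_lincomb) (simp_all add: qm_eq_def fa_diff_def fin_supp_qm_ideal)
  then show "fin_supp ?e" by simp
qed

lemma qm_central_iff_act_comm:
  assumes "q \<noteq> 0" and "r \<noteq> 0" and f: "fin_supp f"
  shows "qm_central (q * r) q f \<longleftrightarrow>
    (\<forall>h v. act q r f (lmul q r h v) = lmul q r h (act q r f v))"
proof
  assume central: "qm_central (q * r) q f"
  show "\<forall>h v. act q r f (lmul q r h v) = lmul q r h (act q r f v)"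
  proof (intro allI)
    fix h v
    have "qm_eq (q * r) q (fa_mult f (fa_word [h])) (fa_mult (fa_word [h]) f)"
      using central fin_supp_word unfolding qm_central_def fa_gen_def by blast
    then have "act q r (fa_mult f (fa_word [h])) v = act q r (fa_mult (fa_word [h]) f) v"
      using assms by (intro act_eq_if_qm_eq) (simp_all add: fin_supp_mult fin_supp_word)
    then show "act q r f (lmul q r h v) = lmul q r h (act q r f v)"
      by (simp add: act_mult_word_right act_mult_word_left f)
  qed
next
  assume comm: "\<forall>h v. act q r f (lmul q r h v) = lmul q r h (act q r f v)"
  show "qm_central (q * r) q f"
    unfolding qm_central_def
  proof (intro allI impI)
    fix g :: "'a falg" assume g: "fin_supp g"
    have G: "finite {w. g w \<noteq> 0}" using g by (simp add: fin_supp_def)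
    have "act q r g (act q r f pbw_one)
        = (\<lambda>m. \<Sum>w\<in>{w. g w \<noteq> 0}. g w * act_word q r w (act q r f pbw_one) m)"
      by (simp only: act_def[of q r g])
    also have "\<dots> = (\<lambda>m. \<Sum>w\<in>{w. g w \<noteq> 0}. g w * act q r f (act_word q r w pbw_one) m)"
      by (simp only: act_commute_act_word[OF comm[rule_format]])
    also have "\<dots> = act q r f (act q r g pbw_one)"
      by (simp only: act_def[of q r g] pbw_linear_sum[OF pbw_linear_act G])
    finally have "act q r f (act q r g pbw_one) = act q r g (act q r f pbw_one)" ..
    then show "qm_eq (q * r) q (fa_mult f g) (fa_mult g f)"
      using assms g by (simp add: qm_eq_iff_act_one fin_supp_mult act_mult)
  qed
qed

section \<open>The elements \<open>y\<^sub>i\<^sub>j = x\<^sub>i\<^sub>j\<^sup>l\<close> are central\<close>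

lemma kappa_Suc_left: "q \<noteq> 0 \<Longrightarrow> kappa q r (Suc n) = kappa q r 1 + q * r * kappa q r n"
  by (simp add: kappa_def field_simps)

lemma kappa_Suc_right: "q \<noteq> 0 \<Longrightarrow> kappa q r (Suc n) = kappa q r n + kappa q r 1 * (q * r) ^ n"
  by (simp add: kappa_def field_simps)

lemma kappa_eq_0: "q ^ l = 1 \<Longrightarrow> r ^ l = 1 \<Longrightarrow> l dvd n \<Longrightarrow> kappa q r n = 0"
  by (auto simp: kappa_def power_mult_distrib power_mult elim!: dvdE)

lemma act_word_replicate_skew:
  assumes "\<And>v. lmul q r g (H v) = (\<lambda>m. s * H (lmul q r g v) m)"
  shows "act_word q r (replicate n g) (H v) = (\<lambda>m. s ^ n * H (act_word q r (replicate n g) v) m)"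
proof (induction n)
  case (Suc n)
  then show ?case
    by (simp add: pbw_linear_smult[OF pbw_linear_lmul] assms algebra_simps)
qed simp

lemma act_word_replicate_skew_comm:
  assumes skew: "\<And>v. lmul q r g (lmul q r h v) = (\<lambda>m. s * lmul q r h (lmul q r g v) m)"
    and "s \<noteq> 0" and "s ^ l = 1"
  shows "act_word q r (replicate l g) (lmul q r h v) = lmul q r h (act_word q r (replicate l g) v)"
    and "act_word q r (replicate l h) (lmul q r g v) = lmul q r g (act_word q r (replicate l h) v)"
proof -
  have "lmul q r h (lmul q r g v) = (\<lambda>m. inverse s * lmul q r g (lmul q r h v) m)" for v
    using skew \<open>s \<noteq> 0\<close> by (simp add: fun_eq_iff)
  then show "act_word q r (replicate l h) (lmul q r g v) = lmul q r g (act_word q r (replicate l h) v)"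
    using act_word_replicate_skew[of q r h "lmul q r g" "inverse s" l v] \<open>s ^ l = 1\<close>
    by (simp add: power_inverse)
qed (use act_word_replicate_skew[of q r g "lmul q r h" s l v, OF skew] \<open>s ^ l = 1\<close> in simp)

lemma act_word_replicate_X22_lmul_X11:
  assumes "q \<noteq> 0" and "r \<noteq> 0"
  shows "act_word q r (replicate (Suc n) X22) (lmul q r X11 v) =
    (\<lambda>m. lmul q r X11 (act_word q r (replicate (Suc n) X22) v) m
       + kappa q r (Suc n) * lmul q r X12 (lmul q r X21 (act_word q r (replicate n X22) v)) m)"
proof (induction n)
  case 0
  then show ?case using lmul_commutation(6)[OF assms] by simp
next
  case (Suc n)
  note comm = lmul_commutation[OF assms]
  have X22_X12_X21: "lmul q r X22 (lmul q r X12 (lmul q r X21 v)) =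
      (\<lambda>m. (q * r) * lmul q r X12 (lmul q r X21 (lmul q r X22 v)) m)" for v
    by (simp add: comm(3,4) pbw_linear_smult[OF pbw_linear_lmul] mult_ac)
  from Suc show ?case
    by (simp add: pbw_linearD[OF pbw_linear_lmul, of _ _ _ 1, simplified] comm(6) X22_X12_X21
        kappa_Suc_left[OF assms(1), of r "Suc n"] algebra_simps)
qed

lemma lmul_X22_act_word_replicate_X11:
  assumes "q \<noteq> 0" and "r \<noteq> 0"
  shows "lmul q r X22 (act_word q r (replicate (Suc n) X11) v) =
    (\<lambda>m. act_word q r (replicate (Suc n) X11) (lmul q r X22 v) m
       + kappa q r (Suc n) * act_word q r (replicate n X11) (lmul q r X12 (lmul q r X21 v)) m)"
proof (induction n)
  case 0
  then show ?case using lmul_commutation(6)[OF assms] by simp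
next
  case (Suc n)
  note comm = lmul_commutation[OF assms]
  let ?H = "\<lambda>v. lmul q r X12 (lmul q r X21 v)"
  have X11_past_H: "lmul q r X11 (?H v) = (\<lambda>m. inverse (q * r) * ?H (lmul q r X11 v) m)" for v
    using assms by (simp add: comm(1,2) pbw_linear_smult[OF pbw_linear_lmul] fun_eq_iff field_simps)
  have H_past_X11: "?H (lmul q r X11 (act_word q r (replicate k X11) v)) =
      (\<lambda>m. (q * r) ^ Suc k * lmul q r X11 (act_word q r (replicate k X11) (?H v)) m)" for k v
    using act_word_replicate_skew[of q r X11 ?H _ "Suc k" v, OF X11_past_H] assms
    by (simp add: fun_eq_iff power_inverse field_simps)
  from Suc show ?case
    by (simp add: comm(6) pbw_linearD[OF pbw_linear_lmul, of _ _ _ 1, simplified] H_past_X11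
        kappa_Suc_right[OF assms(1), of r "Suc n"] algebra_simps)
qed

lemma act_word_replicate_lmul_comm_out_of_order:
  assumes q: "q \<noteq> 0" and r: "r \<noteq> 0" and "q ^ l = 1" and "r ^ l = 1" and "0 < l"
    and gh: "gen_rank h < gen_rank g"
  shows "act_word q r (replicate l g) (lmul q r h v) = lmul q r h (act_word q r (replicate l g) v)"
    and "act_word q r (replicate l h) (lmul q r g v) = lmul q r g (act_word q r (replicate l h) v)"
proof -
  have "act_word q r (replicate l g) (lmul q r h v) = lmul q r h (act_word q r (replicate l g) v)
      \<and> act_word q r (replicate l h) (lmul q r g v) = lmul q r g (act_word q r (replicate l h) v)"
  proof (cases "(g, h) = (X22, X11)")
    case True
    obtain n where l: "l = Suc n" using \<open>0 < l\<close> by (cases l) auto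
    have "kappa q r l = 0" using assms by (simp add: kappa_eq_0)
    with True l show ?thesis
      using act_word_replicate_X22_lmul_X11[OF q r, of n v]
        lmul_X22_act_word_replicate_X11[OF q r, of n v] by simp
  next
    case False
    then obtain s where s: "straighten_coeffs q r g h = (s, 0)" and "s \<in> {q, r, r / q}"
      using straighten_coeffs_skew[OF gh False, of q r] by auto
    then have "s \<noteq> 0" and "s ^ l = 1" using assms by (auto simp: power_divide)
    moreover have "lmul q r g (lmul q r h v) = (\<lambda>m. s * lmul q r h (lmul q r g v) m)" for v
      using lmul_straighten[OF q r gh] s by simp
    ultimately show ?thesis by (simp add: act_word_replicate_skew_comm)
  qed
  then show "act_word q r (replicate l g) (lmul q r h v) = lmul q r h (act_word q r (replicate l g) v)"
    and "act_word q r (replicate l h) (lmul q r g v) = lmul q r g (act_word q r (replicate l h) v)"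
    by simp_all
qed

lemma act_word_replicate_lmul_comm:
  assumes "q \<noteq> 0" and "r \<noteq> 0" and "q ^ l = 1" and "r ^ l = 1" and "0 < l"
  shows "act_word q r (replicate l g) (lmul q r h v) = lmul q r h (act_word q r (replicate l g) v)"
proof -
  consider "g = h" | "gen_rank h < gen_rank g" | "gen_rank g < gen_rank h"
    by (cases g; cases h) simp_all
  then show ?thesis
    by cases (simp_all add: act_word_replicate_Suc[symmetric]
        act_word_replicate_lmul_comm_out_of_order[OF assms])
qed

definition scale_exps :: "nat \<Rightarrow> nat \<times> nat \<times> nat \<times> nat \<Rightarrow> nat \<times> nat \<times> nat \<times> nat" where
  "scale_exps l = (\<lambda>(a, b, c, d). (l * a, l * b, l * c, l * d))"

lemma inj_scale_exps: "0 < l \<Longrightarrow> inj (scale_exps l)"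
  by (auto simp: inj_def scale_exps_def)

lemma act_word_scaled_lmul_comm:
  assumes "q \<noteq> 0" and "r \<noteq> 0" and "q ^ l = 1" and "r ^ l = 1" and "0 < l"
  shows "act_word q r (pbw_word (scale_exps l m)) (lmul q r h v)
       = lmul q r h (act_word q r (pbw_word (scale_exps l m)) v)"
proof -
  have rep: "act_word q r (replicate (l * k) g) (lmul q r h v)
      = lmul q r h (act_word q r (replicate (l * k) g) v)" for k g v
  proof (induction k arbitrary: v)
    case (Suc k)
    have "replicate (l * Suc k) g = replicate l g @ replicate (l * k) g"
      by (simp add: replicate_add)
    then show ?case
      using Suc act_word_replicate_lmul_comm[OF assms] by (simp add: act_word_append)
  qed simp
  obtain a b c d where "m = (a, b, c, d)" by (cases m)
  then show ?thesis by (simp add: scale_exps_def pbw_word_def act_word_append rep)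
qed

lemma ymon_eq_fa_word: "ymon l m = fa_word (pbw_word (scale_exps l m))"
proof -
  have concat: "concat (replicate k (replicate l g)) = replicate (l * k) g" for k g
    by (induction k) (simp_all add: replicate_add)
  have pow: "fa_pow (fa_pow (fa_gen g) l) k = fa_word (replicate (l * k) g)" for g k
    by (simp add: fa_gen_def fa_pow_word concat)
  show ?thesis
    by (cases m) (simp add: ymon_def pow fa_mult_word_word pbw_word_def scale_exps_def)
qed

lemma fin_supp_ycomb: "finite S \<Longrightarrow> fin_supp (ycomb l S c)"
  unfolding ycomb_def ymon_eq_fa_word by (simp add: fin_supp_sum fin_supp_word)

lemma act_ycomb:
  "finite S \<Longrightarrow> act q r (ycomb l S c) v
     = (\<lambda>m'. \<Sum>m\<in>S. c m * act_word q r (pbw_word (scale_exps l m)) v m')"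
  unfolding ycomb_def ymon_eq_fa_word by (simp add: act_sum fin_supp_word act_fa_word)

lemma act_ycomb_lmul_comm:
  assumes "q \<noteq> 0" and "r \<noteq> 0" and "q ^ l = 1" and "r ^ l = 1" and "0 < l" and "finite S"
  shows "act q r (ycomb l S c) (lmul q r h v) = lmul q r h (act q r (ycomb l S c) v)"
  using assms
  by (simp add: act_ycomb act_word_scaled_lmul_comm pbw_linear_sum[OF pbw_linear_lmul])

lemma act_ycomb_one:
  assumes "0 < l" and "finite S"
  shows "act q r (ycomb l S c) pbw_one (scale_exps l m) = (if m \<in> S then c m else 0)"
    and "m' \<notin> range (scale_exps l) \<Longrightarrow> act q r (ycomb l S c) pbw_one m' = 0"
proof -
  have one: "act q r (ycomb l S c) pbw_one = (\<lambda>m'. \<Sum>m0\<in>S. c m0 * pbw_basis (scale_exps l m0) m')"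
    using assms(2) by (simp add: act_ycomb act_word_pbw_word)
  have "act q r (ycomb l S c) pbw_one (scale_exps l m) = (\<Sum>m0\<in>S. if m0 = m then c m else 0)"
    using inj_scale_exps[OF assms(1)] unfolding one
    by (auto simp: pbw_basis_def inj_eq intro: sum.cong)
  then show "act q r (ycomb l S c) pbw_one (scale_exps l m) = (if m \<in> S then c m else 0)"
    using assms(2) by simp
  show "m' \<notin> range (scale_exps l) \<Longrightarrow> act q r (ycomb l S c) pbw_one m' = 0"
    unfolding one by (auto simp: pbw_basis_def intro!: sum.neutral)
qed

section \<open>Roots of unity of coprime orders\<close>

lemma power_eq_1_iff_mord_dvd:
  fixes a :: "'k::field"
  assumes "\<exists>n>0. a ^ n = 1"
  shows "a ^ k = 1 \<longleftrightarrow> mord a dvd k"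
proof -
  have mord: "0 < mord a" "a ^ mord a = 1"
    using LeastI_ex[OF assms] by (simp_all add: mord_def)
  have "a ^ (k mod mord a) = 1" if "a ^ k = 1"
    using that mord(2) by (metis div_mult_mod_eq mult.commute mult_1 power_add power_mult power_one)
  moreover have "\<not> (0 < k mod mord a \<and> a ^ (k mod mord a) = 1)"
  proof
    assume "0 < k mod mord a \<and> a ^ (k mod mord a) = 1"
    then have "mord a \<le> k mod mord a" unfolding mord_def by (rule Least_le)
    with mod_less_divisor[OF mord(1), of k] show False by simp
  qed
  ultimately show ?thesis
    using mord(2) by (auto simp: power_mult elim!: dvdE)
qed

lemma mord_pos: "\<exists>n>0. a ^ n = 1 \<Longrightarrow> 0 < mord a"
  using LeastI_ex[of "\<lambda>n. 0 < n \<and> a ^ n = 1"] by (simp add: mord_def)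

lemma mord_dvd_if_power_power_eq_1:
  fixes a :: "'k::field"
  assumes "\<exists>n>0. a ^ n = 1" and "(a ^ x) ^ n = 1" and "coprime (mord a) n"
  shows "mord a dvd x"
proof -
  have "mord a dvd x * n"
    using assms(2) power_eq_1_iff_mord_dvd[OF assms(1), of "x * n"] by (simp add: power_mult)
  then show ?thesis using assms(3) by (simp add: coprime_dvd_mult_left_iff)
qed

lemma coprime_mord_power_eq:
  fixes q r :: "'k::field"
  assumes q: "\<exists>n>0. q ^ n = 1" and r: "\<exists>n>0. r ^ n = 1"
    and cop: "coprime (mord q) (mord r)" and eq: "q ^ x = r ^ y"
  shows "mord q dvd x" and "mord r dvd y"
proof -
  have "(q ^ x) ^ mord r = 1"
    unfolding eq power_mult[symmetric] by (simp add: power_eq_1_iff_mord_dvd[OF r])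
  moreover have "(r ^ y) ^ mord q = 1"
    unfolding eq[symmetric] power_mult[symmetric] by (simp add: power_eq_1_iff_mord_dvd[OF q])
  ultimately show "mord q dvd x" and "mord r dvd y"
    using cop by (auto intro: mord_dvd_if_power_power_eq_1 q r simp: coprime_commute)
qed

lemma coprime_mord_power_mult_eq_1:
  fixes q r :: "'k::field"
  assumes q: "\<exists>n>0. q ^ n = 1" and r: "\<exists>n>0. r ^ n = 1"
    and cop: "coprime (mord q) (mord r)" and eq: "q ^ x * r ^ y = 1"
  shows "mord q dvd x" and "mord r dvd y"
proof -
  have r1: "(r ^ y) ^ mord r = 1" and q1: "(q ^ x) ^ mord q = 1"
    unfolding power_mult[symmetric]
    by (simp_all add: power_eq_1_iff_mord_dvd[OF r] power_eq_1_iff_mord_dvd[OF q])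
  have "(q ^ x) ^ mord r = 1" "(r ^ y) ^ mord q = 1"
    using arg_cong[OF eq, of "\<lambda>z. z ^ mord r"] arg_cong[OF eq, of "\<lambda>z. z ^ mord q"] r1 q1
    by (simp_all add: power_mult_distrib)
  then show "mord q dvd x" and "mord r dvd y"
    using cop by (auto intro: mord_dvd_if_power_power_eq_1 q r simp: coprime_commute)
qed

lemma lcm_mord_dvd_exponents:
  fixes q r :: "'k::field"
  assumes q: "\<exists>n>0. q ^ n = 1" and r: "\<exists>n>0. r ^ n = 1" and cop: "coprime (mord q) (mord r)"
    and "q ^ (a + c) = r ^ (c + d)" and "q ^ (b + d) = r ^ (a + b)"
    and "q ^ b * r ^ c = 1" and "q ^ c * r ^ b = 1"
  shows "lcm (mord q) (mord r) dvd a \<and> lcm (mord q) (mord r) dvd b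
       \<and> lcm (mord q) (mord r) dvd c \<and> lcm (mord q) (mord r) dvd d"
proof -
  note eq = coprime_mord_power_eq[OF q r cop] and eq1 = coprime_mord_power_mult_eq_1[OF q r cop]
  have "mord q dvd b" "mord r dvd c" "mord q dvd c" "mord r dvd b"
    using eq1 assms(6,7) by blast+
  moreover have "mord q dvd a + c" "mord r dvd c + d" "mord q dvd b + d" "mord r dvd a + b"
    using eq assms(4,5) by blast+
  ultimately show ?thesis
    by (auto simp: dvd_add_left_iff dvd_add_right_iff intro: lcm_least)
qed

section \<open>Central elements are spanned by the monomials in the \<open>y\<^sub>i\<^sub>j\<close>\<close>

lemma lmul_eq_rmul_if_act_comm:
  assumes "q \<noteq> 0" and "r \<noteq> 0" and "fin_supp f"
    and comm: "\<And>h v. act q r f (lmul q r h v) = lmul q r h (act q r f v)"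
  shows "lmul q r h (act q r f pbw_one) = rmul q r h (act q r f pbw_one)"
  using lmul_one_eq_rmul_one[of q r h] act_rmul_comm[OF assms(1-3)] by (simp flip: comm)

lemma exponent_relations_if_lmul_eq_rmul:
  assumes "q \<noteq> 0" and lr: "\<And>h. lmul q r h v = rmul q r h v" and nz: "v (a, b, c, d) \<noteq> 0"
    and k: "kappa q r (a + 1) = 0 \<and> kappa q r (d + 1) = 0 \<or> v (a + 1, b - 1, c - 1, d + 1) = 0"
  shows "q ^ (a + c) = r ^ (c + d)" and "q ^ (b + d) = r ^ (a + b)"
    and "q ^ b * r ^ c = 1" and "q ^ c * r ^ b = 1"
proof -
  have at: "lmul q r h v m = rmul q r h v m" for h m
    using lr by simp
  have "q ^ a = r ^ d * (r / q) ^ c"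
    using at[of X12 "(a, Suc b, c, d)"] nz by (simp add: lmul_at rmul_at)
  then show "q ^ (a + c) = r ^ (c + d)"
    using \<open>q \<noteq> 0\<close> by (simp add: power_add power_divide field_simps)
  have "r ^ a * (r / q) ^ b = q ^ d"
    using at[of X21 "(a, b, Suc c, d)"] nz by (simp add: lmul_at rmul_at)
  then show "q ^ (b + d) = r ^ (a + b)"
    using \<open>q \<noteq> 0\<close> by (simp add: power_add power_divide field_simps)
  have "v (a, b, c, d) = q ^ b * r ^ c * v (a, b, c, d)"
    using at[of X11 "(Suc a, b, c, d)"] k by (auto simp: lmul_at rmul_at split: if_splits)
  then show "q ^ b * r ^ c = 1" using nz by simp
  have "r ^ b * q ^ c * v (a, b, c, d) = v (a, b, c, d)"
    using at[of X22 "(a, b, c, Suc d)"] k by (auto simp: lmul_at rmul_at split: if_splits)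
  then show "q ^ c * r ^ b = 1" using nz by (simp add: mult.commute)
qed

text \<open>Downward induction on the exponent of \<open>x11\<close>: the monomial \<open>(a + 1, b - 1, c - 1, d + 1)\<close>
  entering the correction terms is either absent or, by induction, has exponents divisible by
  \<open>l\<close>, and then the coefficients \<open>kappa\<close> in front of it vanish.\<close>

lemma support_divisible_if_lmul_eq_rmul:
  fixes q r :: "'k::field"
  assumes q0: "q \<noteq> 0" and q: "\<exists>n>0. q ^ n = 1" and r: "\<exists>n>0. r ^ n = 1"
    and cop: "coprime (mord q) (mord r)" and l: "l = lcm (mord q) (mord r)"
    and fin: "finite {m. v m \<noteq> 0}" and lr: "\<And>h. lmul q r h v = rmul q r h v"
    and nz: "v (a, b, c, d) \<noteq> 0"
  shows "l dvd a \<and> l dvd b \<and> l dvd c \<and> l dvd d"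
proof -
  have "finite (fst ` {m. v m \<noteq> 0})" using fin by simp
  then obtain N where N: "\<And>m. v m \<noteq> 0 \<Longrightarrow> fst m \<le> N"
    unfolding finite_nat_set_iff_bounded_le by blast
  have ql: "q ^ l = 1" and rl: "r ^ l = 1"
    by (simp_all add: l power_eq_1_iff_mord_dvd[OF q] power_eq_1_iff_mord_dvd[OF r])
  from nz show ?thesis
  proof (induction "N - a" arbitrary: a b c d rule: less_induct)
    case less
    let ?n = "(a + 1, b - 1, c - 1, d + 1)"
    have "kappa q r (a + 1) = 0 \<and> kappa q r (d + 1) = 0 \<or> v ?n = 0"
    proof (cases "v ?n = 0")
      case False
      with N[OF False] N[OF less.prems] have "N - (a + 1) < N - a" by simp
      with less.hyps False have "l dvd a + 1" "l dvd d + 1" by blast+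
      then show ?thesis by (simp add: kappa_eq_0[OF ql rl])
    qed simp
    then show ?case
      using exponent_relations_if_lmul_eq_rmul[OF q0 lr less.prems]
        lcm_mord_dvd_exponents[OF q r cop] l by blast
  qed
qed

lemma act_ycomb_eq_coeffs:
  assumes l: "0 < l" and fin: "finite {m. v m \<noteq> 0}"
    and scaled: "{m. v m \<noteq> 0} \<subseteq> range (scale_exps l)"
  shows "act q r (ycomb l (scale_exps l -` {m. v m \<noteq> 0}) (\<lambda>m. v (scale_exps l m))) pbw_one = v"
proof
  fix m'
  let ?S = "scale_exps l -` {m. v m \<noteq> 0}"
  have S: "finite ?S" using fin inj_scale_exps[OF l] by (rule finite_vimageI)
  show "act q r (ycomb l ?S (\<lambda>m. v (scale_exps l m))) pbw_one m' = v m'"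
  proof (cases "m' \<in> range (scale_exps l)")
    case True
    then obtain m where m': "m' = scale_exps l m" by blast
    have "act q r (ycomb l ?S (\<lambda>m. v (scale_exps l m))) pbw_one (scale_exps l m)
        = (if m \<in> ?S then v (scale_exps l m) else 0)"
      by (rule act_ycomb_one(1)[OF l S])
    then show ?thesis by (simp add: m')
  next
    case False
    then have "v m' = 0" using scaled by blast
    moreover have "act q r (ycomb l ?S (\<lambda>m. v (scale_exps l m))) pbw_one m' = 0"
      using False by (rule act_ycomb_one(2)[OF l S])
    ultimately show ?thesis by simp
  qed
qed

lemma qm_central_imp_ycomb:
  fixes q r :: "'k::field"
  assumes q0: "q \<noteq> 0" and r0: "r \<noteq> 0" and q: "\<exists>n>0. q ^ n = 1" and r: "\<exists>n>0. r ^ n = 1"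
    and cop: "coprime (mord q) (mord r)" and l: "l = lcm (mord q) (mord r)"
    and f: "fin_supp f" and central: "qm_central (q * r) q f"
  shows "\<exists>S c. finite S \<and> qm_eq (q * r) q f (ycomb l S c)"
proof -
  define v where "v = act q r f pbw_one"
  define S where "S = scale_exps l -` {m. v m \<noteq> 0}"
  have l0: "0 < l" using l mord_pos[OF q] mord_pos[OF r] by (simp add: lcm_pos_nat)
  have fin: "finite {m. v m \<noteq> 0}"
    unfolding v_def using q0 r0 f by (rule finite_coeffs_act_one)
  have lr: "lmul q r h v = rmul q r h v" for h
    unfolding v_def using q0 r0 f central
    by (intro lmul_eq_rmul_if_act_comm) (simp_all add: qm_central_iff_act_comm)
  have scaled: "{m. v m \<noteq> 0} \<subseteq> range (scale_exps l)"
  proof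
    fix m assume "m \<in> {m. v m \<noteq> 0}"
    moreover obtain a b c d where m: "m = (a, b, c, d)" by (cases m)
    ultimately have "l dvd a \<and> l dvd b \<and> l dvd c \<and> l dvd d"
      using support_divisible_if_lmul_eq_rmul[OF q0 q r cop l fin lr] by blast
    then show "m \<in> range (scale_exps l)"
      by (intro image_eqI[of _ _ "(a div l, b div l, c div l, d div l)"]) (simp_all add: m scale_exps_def)
  qed
  have S: "finite S"
    unfolding S_def using fin inj_scale_exps[OF l0] by (rule finite_vimageI)
  have "act q r (ycomb l S (\<lambda>m. v (scale_exps l m))) pbw_one = v"
    unfolding S_def by (rule act_ycomb_eq_coeffs[OF l0 fin scaled])
  then have "qm_eq (q * r) q f (ycomb l S (\<lambda>m. v (scale_exps l m)))"
    using q0 r0 f S by (simp add: qm_eq_iff_act_one fin_supp_ycomb v_def)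
  with S show ?thesis by blast
qed

lemma qm_central_if_qm_eq_ycomb:
  assumes "q \<noteq> 0" and "r \<noteq> 0" and "q ^ l = 1" and "r ^ l = 1" and "0 < l"
    and "fin_supp f" and "finite S" and "qm_eq (q * r) q f (ycomb l S c)"
  shows "qm_central (q * r) q f"
  using assms
  by (simp add: qm_central_iff_act_comm act_eq_if_qm_eq[OF _ _ _ fin_supp_ycomb]
      act_ycomb_lmul_comm)

lemma ycomb_eq_0_imp_coeffs_0:
  assumes "q \<noteq> 0" and "r \<noteq> 0" and "0 < l" and "finite S"
    and "qm_eq (q * r) q (ycomb l S c) (\<lambda>w. 0)" and "m \<in> S"
  shows "c m = 0"
proof -
  have "act q r (ycomb l S c) pbw_one = act q r (\<lambda>w. 0) pbw_one"
    using qm_eq_iff_act_one[OF assms(1,2) fin_supp_ycomb[OF assms(4)], of "\<lambda>w. 0"] assms(5)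
    by (simp add: fin_supp_def)
  then have "act q r (ycomb l S c) pbw_one (scale_exps l m) = 0"
    by (simp add: act_def)
  then show ?thesis using assms(6) by (simp add: act_ycomb_one(1)[OF assms(3,4)])
qed

theorem qm_center:
  fixes q r :: "'k::field"
  assumes q0: "q \<noteq> 0" and r0: "r \<noteq> 0" and q: "\<exists>n>0. q ^ n = 1" and r: "\<exists>n>0. r ^ n = 1"
    and cop: "coprime (mord q) (mord r)" and l: "l = lcm (mord q) (mord r)"
  shows "fin_supp f \<Longrightarrow>
      qm_central (q * r) q f \<longleftrightarrow> (\<exists>S c. finite S \<and> qm_eq (q * r) q f (ycomb l S c))"
    and "finite S \<Longrightarrow> qm_eq (q * r) q (ycomb l S c) (\<lambda>w. 0) \<Longrightarrow> m \<in> S \<Longrightarrow> c m = 0"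
proof -
  have "q ^ l = 1" and "r ^ l = 1"
    by (simp_all add: l power_eq_1_iff_mord_dvd[OF q] power_eq_1_iff_mord_dvd[OF r])
  moreover have "0 < l" using l mord_pos[OF q] mord_pos[OF r] by (simp add: lcm_pos_nat)
  ultimately show "fin_supp f \<Longrightarrow>
      qm_central (q * r) q f \<longleftrightarrow> (\<exists>S c. finite S \<and> qm_eq (q * r) q f (ycomb l S c))"
    and "finite S \<Longrightarrow> qm_eq (q * r) q (ycomb l S c) (\<lambda>w. 0) \<Longrightarrow> m \<in> S \<Longrightarrow> c m = 0"
    using qm_central_imp_ycomb[OF assms] qm_central_if_qm_eq_ycomb[OF q0 r0]
      ycomb_eq_0_imp_coeffs_0[OF q0 r0]
    by blast+
qed

theorem mainTheorem2:
  fixes lam p12 :: "'k::field_char_0"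
  assumes alg_closed: "\<And>q :: 'k poly. 0 < degree q \<Longrightarrow> \<exists>z. poly q z = 0"
    and lam_nz: "lam \<noteq> 0" and p12_nz: "p12 \<noteq> 0"
    and lam_sq: "lam ^ 2 \<noteq> 1"
    and root1: "\<exists>n>0. p12 ^ n = (1::'k)"
    and root2: "\<exists>n>0. (lam * inverse p12) ^ n = (1::'k)"
    and cop: "coprime (mord p12) (mord (lam * inverse p12))"
    and l_def: "l = lcm (mord p12) (mord (lam * inverse p12))"
  shows "(\<forall>f. fin_supp f \<longrightarrow>
            (qm_central lam p12 f \<longleftrightarrow>
              (\<exists>S c. finite S \<and> qm_eq lam p12 f (ycomb l S c))))
       \<and> (\<forall>S (c :: nat \<times> nat \<times> nat \<times> nat \<Rightarrow> 'k). finite S \<longrightarrow>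
            qm_eq lam p12 (ycomb l S c) (\<lambda>w. 0) \<longrightarrow> (\<forall>m\<in>S. c m = 0))"
proof -
  define r where "r = lam * inverse p12"
  have lam: "lam = p12 * r" and "r \<noteq> 0"
    using lam_nz p12_nz by (simp_all add: r_def)
  have "\<exists>n>0. r ^ n = 1" and "coprime (mord p12) (mord r)" and "l = lcm (mord p12) (mord r)"
    using root2 cop l_def by (simp_all add: r_def)
  note center = qm_center[OF p12_nz \<open>r \<noteq> 0\<close> root1 this]
  show ?thesis
    unfolding lam using center by blast
qed

end
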